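(* Let $1 \leq p < +\infty$ and let $\mathbb{P}$ be a Borel probability measure over $\mathbb{R}$ (i.e. a probability measure defined on the Borel $\sigma$-algebra $\mathcal{B}_{\mathbb{R}}$ of $\mathbb{R}$). Then for every real number $M \geq 0$, the set of $M$-sensitive random variables is dense in $L^{p}(\mathbb{R}, \mathcal{B}_{\mathbb{R}}, \mathbb{P})$ with respect to the $L^{p}$-norm: for every $X \in L^{p}(\mathbb{R}, \mathcal{B}_{\mathbb{R}}, \mathbb{P})$ and every $\varepsilon > 0$ there is an $M$-sensitive random variable $Y$ with $\|Y - X\|_{L^{p}(\mathbb{P})} < \varepsilon$.
   Context: A Borel random variable on $\mathbb{R}$ is an $\mathbb{R}$-valued Borel-measurable function defined on $\mathbb{R}$. Given a real number $M \geq 0$, a Borel random variable $Y$ on $\mathbb{R}$ is called $M$-sensitive if and only if $Y \in L^{\infty}(\mathbb{R}, \mathcal{B}_{\mathbb{R}}, \mathbb{P})$, $Y$ is differentiable at Lebesgue-almost every point of $\mathbb{R}$, and $|Y'(x)| > M$ at every point $x$ at which $Y$ is differentiable. *)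

theory Defs
  imports "HOL-Probability.Probability"
begin

definition Linfty :: "real measure \<Rightarrow> (real \<Rightarrow> real) \<Rightarrow> bool" where
  "Linfty P Y \<longleftrightarrow> Y \<in> borel_measurable P \<and> (\<exists>C. AE x in P. \<bar>Y x\<bar> \<le> C)"

definition M_sensitive :: "real measure \<Rightarrow> real \<Rightarrow> (real \<Rightarrow> real) \<Rightarrow> bool" where
  "M_sensitive P M Y \<longleftrightarrow>
     Linfty P Y \<and>
     (AE x in lebesgue. Y differentiable (at x)) \<and>
     (\<forall>x D. (Y has_real_derivative D) (at x) \<longrightarrow> \<bar>D\<bar> > M)"

definition Lp_mem :: "real measure \<Rightarrow> real \<Rightarrow> (real \<Rightarrow> real) \<Rightarrow> bool" where
  "Lp_mem P p X \<longleftrightarrow> X \<in> borel_measurable P \<and> integrable P (\<lambda>x. \<bar>X x\<bar> powr p)"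

definition Lp_norm :: "real measure \<Rightarrow> real \<Rightarrow> (real \<Rightarrow> real) \<Rightarrow> real" where
  "Lp_norm P p X = (\<integral>x. \<bar>X x\<bar> powr p \<partial>P) powr (1 / p)"

end

theory Submission
  imports Defs
begin

(* Truncating X and rounding it down to a multiple of h gives a Borel function q with finitely
   many values.  By inner regularity every level set of q contains a compact set, and these
   compacts carry all but a small part of the mass and lie at positive distance from each
   other; so on a grid of mesh d below that distance, a step function \<phi>(floor(x/d)) reproduces q
   on the compacts.  Adding the sawtooth K (x - d floor(x/d)) with K > M and K d small moves the
   function only slightly, yet its derivative, wherever it exists, is K: on each half-open cell
   [d k, d (k + 1)) the function is affine of slope K, which determines the derivative from the
   right. *)

lemma floor_divide_eq_iff:
  fixes x d :: real
  assumes "d > 0"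
  shows "\<lfloor>x / d\<rfloor> = k \<longleftrightarrow> d * k \<le> x \<and> x < d * (k + 1)"
  using assms by (simp add: floor_eq_iff pos_le_divide_eq pos_divide_less_eq mult.commute)

lemma dist_less_if_floor_divide_eq:
  fixes x y d :: real
  assumes "d > 0" "\<lfloor>x / d\<rfloor> = \<lfloor>y / d\<rfloor>"
  shows "dist x y < d"
  using floor_divide_eq_iff[OF assms(1), of x "\<lfloor>y / d\<rfloor>"]
    floor_divide_eq_iff[OF assms(1), of y "\<lfloor>y / d\<rfloor>"] assms(2)
  by (simp add: dist_real_def abs_less_iff algebra_simps)

definition sawtooth :: "(int \<Rightarrow> real) \<Rightarrow> real \<Rightarrow> real \<Rightarrow> real \<Rightarrow> real" where
  "sawtooth \<phi> d K x = \<phi> \<lfloor>x / d\<rfloor> + K * (x - d * \<lfloor>x / d\<rfloor>)"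

lemma sawtooth_ramp_abs_le:
  fixes x d :: real
  assumes "d > 0"
  shows "\<bar>K * (x - d * \<lfloor>x / d\<rfloor>)\<bar> \<le> \<bar>K\<bar> * d"
proof -
  have "0 \<le> x - d * \<lfloor>x / d\<rfloor>" "x - d * \<lfloor>x / d\<rfloor> < d"
    using floor_divide_eq_iff[OF assms, of x "\<lfloor>x / d\<rfloor>"] by (simp_all add: algebra_simps)
  then show ?thesis by (simp add: abs_mult mult_left_mono)
qed

lemma sawtooth_on_cell:
  "\<lfloor>t / d\<rfloor> = k \<Longrightarrow> sawtooth \<phi> d K t = \<phi> k - K * d * k + K * t"
  by (simp add: sawtooth_def algebra_simps)

lemma sawtooth_borel_measurable [measurable]: "sawtooth \<phi> d K \<in> borel_measurable borel"
proof -
  have "(\<lambda>x::real. \<lfloor>x / d\<rfloor>) \<in> borel \<rightarrow>\<^sub>M count_space UNIV" by measurable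
  then have "(\<lambda>x. \<phi> \<lfloor>x / d\<rfloor>) \<in> borel_measurable borel"
    by (rule measurable_compose) simp
  then show ?thesis unfolding sawtooth_def by measurable
qed

lemma has_real_derivative_right_affine_eq:
  fixes f :: "real \<Rightarrow> real"
  assumes "(f has_real_derivative D) (at x)" "e > 0"
    and "\<And>t. x \<le> t \<Longrightarrow> t < x + e \<Longrightarrow> f t = a + K * t"
  shows "D = K"
proof -
  have "(f has_real_derivative D) (at x within {x..})"
    using assms(1) by (rule has_field_derivative_at_within)
  then have "((\<lambda>t. a + K * t) has_real_derivative D) (at x within {x..})"
    by (rule has_field_derivative_transform_within[OF _ assms(2)])
       (use assms(3) in \<open>auto simp: dist_real_def\<close>)
  moreover have "((\<lambda>t. a + K * t) has_real_derivative K) (at x within {x..})"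
    by (auto intro!: derivative_eq_intros)
  moreover have "at x within {x..} \<noteq> bot"
  proof -
    have "{x..} - {x} = {x<..}" by auto
    then show ?thesis by (simp add: at_within_eq_bot_iff)
  qed
  ultimately show ?thesis
    using has_field_derivative_unique by blast
qed

lemma sawtooth_has_real_derivative_imp_eq:
  assumes "d > 0" "(sawtooth \<phi> d K has_real_derivative D) (at x)"
  shows "D = K"
proof -
  define k where "k = \<lfloor>x / d\<rfloor>"
  have cell: "d * k \<le> x" "x < d * (k + 1)"
    using floor_divide_eq_iff[OF assms(1)] k_def by auto
  show ?thesis
  proof (rule has_real_derivative_right_affine_eq[OF assms(2)])
    show "d * (k + 1) - x > 0" using cell by simp
    fix t assume "x \<le> t" "t < x + (d * (k + 1) - x)"
    then have "\<lfloor>t / d\<rfloor> = k" using cell floor_divide_eq_iff[OF assms(1)] by auto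
    then show "sawtooth \<phi> d K t = \<phi> k - K * d * k + K * t" by (rule sawtooth_on_cell)
  qed
qed

lemma sawtooth_has_real_derivative:
  assumes "d > 0" "x \<notin> range (\<lambda>k. d * of_int k)"
  shows "(sawtooth \<phi> d K has_real_derivative K) (at x)"
proof -
  define k where "k = \<lfloor>x / d\<rfloor>"
  have "d * k \<le> x" "x < d * (k + 1)"
    using floor_divide_eq_iff[OF assms(1)] k_def by auto
  moreover have "d * k \<noteq> x" using assms(2) by auto
  ultimately have x: "x \<in> {d * k <..< d * (k + 1)}" by simp
  have "((\<lambda>t. \<phi> k - K * d * k + K * t) has_real_derivative K) (at x)"
    by (auto intro!: derivative_eq_intros)
  then show ?thesis
  proof (rule has_field_derivative_transform_within_open[OF _ _ x])
    fix t assume "t \<in> {d * k <..< d * (k + 1)}"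
    then have "\<lfloor>t / d\<rfloor> = k" using floor_divide_eq_iff[OF assms(1)] by auto
    then show "\<phi> k - K * d * k + K * t = sawtooth \<phi> d K t"
      by (simp add: sawtooth_on_cell)
  qed simp
qed

lemma AE_sawtooth_differentiable:
  assumes "d > 0"
  shows "AE x in lebesgue. sawtooth \<phi> d K differentiable (at x)"
proof -
  have "AE x in lborel. x \<notin> range (\<lambda>k. d * of_int k)"
    by (intro AE_not_in countable_imp_null_set_lborel) auto
  then have "AE x in lborel. sawtooth \<phi> d K differentiable (at x)"
    by eventually_elim (use sawtooth_has_real_derivative[OF assms] real_differentiable_def in blast)
  then show ?thesis by (rule AE_completion)
qed

lemma sawtooth_M_sensitive:
  assumes "sets P = sets borel" "d > 0" "M < \<bar>K\<bar>" "bounded (range \<phi>)"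
  shows "M_sensitive P M (sawtooth \<phi> d K)"
  unfolding M_sensitive_def Linfty_def
proof (intro conjI allI impI)
  show "sawtooth \<phi> d K \<in> borel_measurable P"
    by (subst measurable_cong_sets[OF assms(1) refl]) simp
  obtain B where "\<And>k. \<bar>\<phi> k\<bar> \<le> B" using assms(4) by (auto simp: bounded_iff)
  have "\<bar>sawtooth \<phi> d K x\<bar> \<le> B + \<bar>K\<bar> * d" for x
    using sawtooth_ramp_abs_le[OF assms(2), of K x] \<open>\<And>k. \<bar>\<phi> k\<bar> \<le> B\<close>[of "\<lfloor>x / d\<rfloor>"]
    by (simp add: sawtooth_def)
  then show "\<exists>C. AE x in P. \<bar>sawtooth \<phi> d K x\<bar> \<le> C" by blast
  show "AE x in lebesgue. sawtooth \<phi> d K differentiable (at x)"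
    by (rule AE_sawtooth_differentiable[OF assms(2)])
  fix x D assume "(sawtooth \<phi> d K has_real_derivative D) (at x)"
  then show "M < \<bar>D\<bar>" using sawtooth_has_real_derivative_imp_eq[OF assms(2)] assms(3) by blast
qed

lemma compact_subset_measure_diff_less:
  fixes P :: "'a::{second_countable_topology, complete_space} measure"
  assumes "finite_measure P" "sets P = sets borel" "A \<in> sets borel" "e > 0"
  shows "\<exists>C. compact C \<and> C \<subseteq> A \<and> measure P (A - C) < e"
proof -
  interpret finite_measure P by fact
  have sets_P: "S \<in> sets P" if "S \<in> sets borel" for S using that assms(2) by simp
  obtain C where C: "compact C" "C \<subseteq> A" "measure P A - e < measure P C"
  proof (cases "measure P A < e")
    case True
    then show ?thesis using that[of "{}"] by simp
  next
    case False
    then have "ennreal (measure P A - e) < ennreal (measure P A)"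
      using assms(4) by (simp add: ennreal_lessI)
    also have "\<dots> = (SUP C \<in> {C. C \<subseteq> A \<and> compact C}. emeasure P C)"
      using inner_regular[OF assms(2) _ assms(3)] sets_P[OF assms(3)]
      by (simp add: emeasure_eq_measure)
    finally obtain C where "C \<subseteq> A" "compact C" "ennreal (measure P A - e) < emeasure P C"
      by (auto simp: less_SUP_iff)
    moreover from this have "C \<in> sets P" by (simp add: sets_P borel_compact)
    ultimately show ?thesis
      using that False by (auto simp: emeasure_eq_measure ennreal_less_iff)
  qed
  moreover have "measure P (A - C) = measure P A - measure P C"
    using C sets_P[OF assms(3)] sets_P[OF borel_compact] by (intro finite_measure_Diff) auto
  ultimately show ?thesis by auto
qed

lemma finite_disjoint_compacts_separated:
  fixes C :: "'i \<Rightarrow> 'a::metric_space set"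
  assumes "finite I" "\<And>i. i \<in> I \<Longrightarrow> compact (C i)"
    and "\<And>i j. i \<in> I \<Longrightarrow> j \<in> I \<Longrightarrow> i \<noteq> j \<Longrightarrow> C i \<inter> C j = {}"
  shows "\<exists>\<delta>>0. \<forall>i\<in>I. \<forall>j\<in>I. \<forall>x\<in>C i. \<forall>y\<in>C j. dist x y < \<delta> \<longrightarrow> i = j"
proof -
  define D where "D = {setdist (C i) (C j) | i j. i \<in> I \<and> j \<in> I \<and> i \<noteq> j \<and> C i \<noteq> {} \<and> C j \<noteq> {}}"
  define \<delta> where "\<delta> = Min (insert 1 D)"
  have "finite D"
    unfolding D_def by (rule finite_subset[of _ "(\<lambda>(i, j). setdist (C i) (C j)) ` (I \<times> I)"])
      (use assms(1) in auto)
  moreover have "0 < s" if "s \<in> D" for s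
    using that assms(2,3) unfolding D_def by (auto simp: setdist_gt_0_compact_closed compact_imp_closed)
  ultimately have "\<delta> > 0" unfolding \<delta>_def by simp
  moreover have "\<delta> \<le> dist x y" if "i \<in> I" "j \<in> I" "i \<noteq> j" "x \<in> C i" "y \<in> C j" for i j x y
  proof -
    have "\<delta> \<le> setdist (C i) (C j)"
      unfolding \<delta>_def using \<open>finite D\<close> that by (intro Min_le) (auto simp: D_def)
    also have "\<dots> \<le> dist x y" using that by (simp add: setdist_le_dist)
    finally show ?thesis .
  qed
  ultimately show ?thesis by force
qed

lemma finite_range_locally_constant_on_compact:
  fixes P :: "'a::{second_countable_topology, complete_space} measure"
  assumes "finite_measure P" "sets P = sets borel"
    and "f \<in> borel \<rightarrow>\<^sub>M count_space UNIV" "finite (range f)" "e > 0"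
  shows "\<exists>C \<delta>. compact C \<and> measure P (- C) < e \<and> \<delta> > 0 \<and>
           (\<forall>x\<in>C. \<forall>y\<in>C. dist x y < \<delta> \<longrightarrow> f x = f y)"
proof -
  interpret finite_measure P by fact
  let ?R = "range f"
  have level_borel: "f -` {c} \<in> sets borel" for c
    using measurable_sets[OF assms(3), of "{c}"] by simp
  have "\<exists>C. compact C \<and> C \<subseteq> f -` {c} \<and> measure P (f -` {c} - C) < e / card ?R" for c
    using assms(4,5) by (intro compact_subset_measure_diff_less[OF assms(1,2) level_borel]) (simp add: card_gt_0_iff)
  then obtain C where C: "\<And>c. compact (C c)" "\<And>c. C c \<subseteq> f -` {c}"
      "\<And>c. measure P (f -` {c} - C c) < e / card ?R"
    by metis
  obtain \<delta> where \<delta>: "\<delta> > 0" "\<forall>c\<in>?R. \<forall>c'\<in>?R. \<forall>x\<in>C c. \<forall>y\<in>C c'. dist x y < \<delta> \<longrightarrow> c = c'"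
  proof (rule finite_disjoint_compacts_separated[OF assms(4) C(1), THEN exE])
    show "C c \<inter> C c' = {}" if "c \<noteq> c'" for c c' using that C(2) by blast
  qed blast
  define K where "K = (\<Union>c\<in>?R. C c)"
  have "compact K" unfolding K_def using assms(4) C(1) by blast
  have gap_sets: "f -` {c} - C c \<in> sets P" for c
    using assms(2) level_borel C(1) by (simp add: sets.Diff borel_compact)
  have "- K \<subseteq> (\<Union>c\<in>?R. f -` {c} - C c)" unfolding K_def by auto
  then have "measure P (- K) \<le> measure P (\<Union>c\<in>?R. f -` {c} - C c)"
    using assms(4) gap_sets by (intro finite_measure_mono sets.finite_UN) auto
  also have "\<dots> \<le> (\<Sum>c\<in>?R. measure P (f -` {c} - C c))"
    using assms(4) gap_sets by (intro finite_measure_subadditive_finite) auto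
  also have "\<dots> < (\<Sum>c\<in>?R. e / card ?R)"
    by (intro sum_strict_mono C(3) assms(4)) auto
  also have "\<dots> = e" using assms(4) by simp
  finally have "measure P (- K) < e" .
  moreover have "f x = f y" if xy: "x \<in> K" "y \<in> K" "dist x y < \<delta>" for x y
  proof -
    obtain c c' where "c \<in> ?R" "c' \<in> ?R" "x \<in> C c" "y \<in> C c'"
      using xy(1,2) unfolding K_def by blast
    moreover from this have "c = c'" using \<delta>(2) xy(3) by blast
    ultimately show ?thesis using C(2) by (metis subsetD vimage_singleton_eq)
  qed
  ultimately show ?thesis using \<open>compact K\<close> \<delta>(1) by blast
qed

lemma grid_step_function_exists:
  fixes f :: "real \<Rightarrow> 'b"
  assumes "d > 0" "\<And>x y. x \<in> C \<Longrightarrow> y \<in> C \<Longrightarrow> dist x y < d \<Longrightarrow> f x = f y"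
  shows "\<exists>\<phi>. range \<phi> \<subseteq> range f \<and> (\<forall>x\<in>C. \<phi> \<lfloor>x / d\<rfloor> = f x)"
proof (intro exI conjI ballI)
  define \<phi> where "\<phi> k = f (SOME y. y \<in> C \<and> \<lfloor>y / d\<rfloor> = k)" for k
  show "range \<phi> \<subseteq> range f" unfolding \<phi>_def by auto
  fix x assume "x \<in> C"
  then have "\<exists>y. y \<in> C \<and> \<lfloor>y / d\<rfloor> = \<lfloor>x / d\<rfloor>" by blast
  then obtain y where "y \<in> C" "\<lfloor>y / d\<rfloor> = \<lfloor>x / d\<rfloor>" "\<phi> \<lfloor>x / d\<rfloor> = f y"
    unfolding \<phi>_def by (metis (mono_tags, lifting) someI_ex)
  with \<open>x \<in> C\<close> show "\<phi> \<lfloor>x / d\<rfloor> = f x"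
    using assms dist_less_if_floor_divide_eq by metis
qed

lemma finite_range_floor_divide:
  fixes f :: "'a \<Rightarrow> real"
  assumes "\<And>x. \<bar>f x\<bar> \<le> B" "h > 0"
  shows "finite (range (\<lambda>x. \<lfloor>f x / h\<rfloor>))"
proof (rule finite_subset)
  have "- B / h \<le> f x / h" "f x / h \<le> B / h" for x
    using assms(1)[of x] assms(2) by (simp_all add: divide_right_mono abs_le_iff field_simps)
  then show "range (\<lambda>x. \<lfloor>f x / h\<rfloor>) \<subseteq> {\<lfloor>- B / h\<rfloor> .. \<lfloor>B / h\<rfloor>}"
    by (auto intro!: floor_mono)
qed simp

lemma bounded_borel_sawtooth_approx:
  assumes "finite_measure P" "sets P = sets borel"
    and "T \<in> borel_measurable borel" "\<And>x. \<bar>T x\<bar> \<le> B" "\<eta> > 0" "e > 0"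
  shows "\<exists>\<phi> d C. d > 0 \<and> (\<forall>k. \<bar>\<phi> k\<bar> \<le> B + \<eta>) \<and> C \<in> sets borel \<and> measure P (- C) < e \<and>
           (\<forall>x. \<bar>sawtooth \<phi> d K x - T x\<bar> \<le> 2 * (B + \<eta>)) \<and> (\<forall>x\<in>C. \<bar>sawtooth \<phi> d K x - T x\<bar> \<le> \<eta>)"
proof -
  define h where "h = \<eta> / 2"
  have "h > 0" using assms(5) by (simp add: h_def)
  define q where "q x = \<lfloor>T x / h\<rfloor>" for x
  have q_meas: "q \<in> borel \<rightarrow>\<^sub>M count_space UNIV" unfolding q_def using assms(3) by measurable
  have q_approx: "h * q x \<le> T x" "T x < h * q x + h" for x
    using floor_divide_lower[OF \<open>h > 0\<close>, of "T x"] floor_divide_upper[OF \<open>h > 0\<close>, of "T x"]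
    by (simp_all add: q_def algebra_simps)
  have "finite (range q)"
    unfolding q_def using assms(4) \<open>h > 0\<close> by (rule finite_range_floor_divide)
  obtain C \<delta> where C: "compact C" "measure P (- C) < e" "\<delta> > 0"
    and q_const: "\<And>x y. x \<in> C \<Longrightarrow> y \<in> C \<Longrightarrow> dist x y < \<delta> \<Longrightarrow> q x = q y"
    using finite_range_locally_constant_on_compact[OF assms(1,2) q_meas \<open>finite (range q)\<close> assms(6)]
    by blast
  define d where "d = min \<delta> (h / (\<bar>K\<bar> + 1))"
  have "d > 0" using C(3) \<open>h > 0\<close> by (simp add: d_def)
  have "\<bar>K\<bar> * d \<le> h"
  proof -
    have "\<bar>K\<bar> * d \<le> (\<bar>K\<bar> + 1) * (h / (\<bar>K\<bar> + 1))"
      using \<open>d > 0\<close> by (intro mult_mono) (auto simp: d_def)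
    then show ?thesis by simp
  qed
  then have ramp: "\<bar>K * (x - d * \<lfloor>x / d\<rfloor>)\<bar> \<le> h" for x
    using sawtooth_ramp_abs_le[OF \<open>d > 0\<close>, of K x] by linarith
  obtain \<psi> where \<psi>: "range \<psi> \<subseteq> range q" "\<And>x. x \<in> C \<Longrightarrow> \<psi> \<lfloor>x / d\<rfloor> = q x"
    using grid_step_function_exists[OF \<open>d > 0\<close>, of C q] q_const by (force simp: d_def)
  define \<phi> where "\<phi> k = h * \<psi> k" for k
  have \<phi>_bound: "\<bar>\<phi> k\<bar> \<le> B + h" for k
  proof -
    obtain y where "\<psi> k = q y" using \<psi>(1) by blast
    then show ?thesis using q_approx[of y] assms(4)[of y] by (simp add: \<phi>_def abs_le_iff)
  qed
  show ?thesis
  proof (intro exI conjI allI ballI)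
    show "d > 0" "C \<in> sets borel" "measure P (- C) < e"
      using \<open>d > 0\<close> C(1,2) by (auto intro: borel_compact)
    show "\<bar>\<phi> k\<bar> \<le> B + \<eta>" for k using \<phi>_bound[of k] \<open>h > 0\<close> by (simp add: h_def)
    show "\<bar>sawtooth \<phi> d K x - T x\<bar> \<le> 2 * (B + \<eta>)" for x
      using \<phi>_bound[of "\<lfloor>x / d\<rfloor>"] ramp[of x] assms(4)[of x] assms(5)
      unfolding sawtooth_def h_def abs_le_iff by auto
    show "\<bar>sawtooth \<phi> d K x - T x\<bar> \<le> \<eta>" if "x \<in> C" for x
      using \<psi>(2)[OF that] q_approx[of x] ramp[of x]
      unfolding sawtooth_def \<phi>_def h_def abs_le_iff by simp
  qed
qed

lemma Lp_approx_by_bounded: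
  fixes X :: "'a \<Rightarrow> real"
  assumes "p > 0" "X \<in> borel_measurable M" "integrable M (\<lambda>x. \<bar>X x\<bar> powr p)" "t > 0"
  shows "\<exists>T B. T \<in> borel_measurable M \<and> (\<forall>x. \<bar>T x\<bar> \<le> B) \<and>
           integrable M (\<lambda>x. \<bar>T x - X x\<bar> powr p) \<and> (\<integral>x. \<bar>T x - X x\<bar> powr p \<partial>M) < t"
proof -
  define T where "T n x = max (- real n) (min (real n) (X x))" for n x
  have T_meas: "T n \<in> borel_measurable M" for n unfolding T_def using assms(2) by measurable
  have T_err_meas: "(\<lambda>x. \<bar>T n x - X x\<bar> powr p) \<in> borel_measurable M" for n
    using T_meas assms(2) by measurable
  have T_err_le: "\<bar>T n x - X x\<bar> powr p \<le> \<bar>X x\<bar> powr p" for n x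
    using assms(1) by (intro powr_mono2) (auto simp: T_def)
  have T_err_int: "integrable M (\<lambda>x. \<bar>T n x - X x\<bar> powr p)" for n
    by (rule Bochner_Integration.integrable_bound[OF assms(3) T_err_meas]) (simp add: T_err_le)
  have "(\<lambda>n. \<integral>x. \<bar>T n x - X x\<bar> powr p \<partial>M) \<longlonglongrightarrow> (\<integral>x. 0 \<partial>M)"
  proof (rule integral_dominated_convergence[OF _ T_err_meas assms(3)])
    show "AE x in M. (\<lambda>n. \<bar>T n x - X x\<bar> powr p) \<longlonglongrightarrow> 0"
    proof (intro AE_I2 tendsto_eventually eventually_sequentiallyI)
      fix x n assume "nat \<lceil>\<bar>X x\<bar>\<rceil> \<le> n"
      then show "\<bar>T n x - X x\<bar> powr p = 0" by (auto simp: T_def)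
    qed
    show "AE x in M. norm (\<bar>T n x - X x\<bar> powr p) \<le> \<bar>X x\<bar> powr p" for n
      by (simp add: T_err_le)
  qed simp
  then have "eventually (\<lambda>n. (\<integral>x. \<bar>T n x - X x\<bar> powr p \<partial>M) < t) sequentially"
    using assms(4) by (intro order_tendstoD(2)) auto
  then obtain n where "(\<integral>x. \<bar>T n x - X x\<bar> powr p \<partial>M) < t"
    by (auto simp: eventually_sequentially)
  moreover have "\<bar>T n x\<bar> \<le> real n" for x by (auto simp: T_def)
  ultimately show ?thesis using T_meas T_err_int by blast
qed

lemma powr_add_le:
  fixes a b p :: real
  assumes "a \<ge> 0" "b \<ge> 0" "p > 0"
  shows "(a + b) powr p \<le> 2 powr p * (a powr p + b powr p)"
proof -
  have "(a + b) powr p \<le> (2 * max a b) powr p"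
    using assms by (intro powr_mono2) auto
  also have "\<dots> = 2 powr p * max a b powr p" using assms by (simp add: powr_mult)
  also have "\<dots> \<le> 2 powr p * (a powr p + b powr p)"
    using assms by (intro mult_left_mono) (auto simp: max_def)
  finally show ?thesis .
qed

lemma integral_powr_abs_diff_triangle:
  fixes f g h :: "'a \<Rightarrow> real"
  assumes "p > 0" and [measurable]: "f \<in> borel_measurable M" "g \<in> borel_measurable M" "h \<in> borel_measurable M"
    and "integrable M (\<lambda>x. \<bar>f x - g x\<bar> powr p)" "integrable M (\<lambda>x. \<bar>g x - h x\<bar> powr p)"
  shows "(\<integral>x. \<bar>f x - h x\<bar> powr p \<partial>M)
    \<le> 2 powr p * ((\<integral>x. \<bar>f x - g x\<bar> powr p \<partial>M) + (\<integral>x. \<bar>g x - h x\<bar> powr p \<partial>M))"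
proof -
  have bound_int: "integrable M (\<lambda>x. 2 powr p * (\<bar>f x - g x\<bar> powr p + \<bar>g x - h x\<bar> powr p))"
    using assms(5,6) by simp
  have pointwise: "\<bar>f x - h x\<bar> powr p \<le> 2 powr p * (\<bar>f x - g x\<bar> powr p + \<bar>g x - h x\<bar> powr p)" for x
  proof -
    have "\<bar>f x - h x\<bar> powr p \<le> (\<bar>f x - g x\<bar> + \<bar>g x - h x\<bar>) powr p"
      using assms(1) by (intro powr_mono2) auto
    also have "\<dots> \<le> 2 powr p * (\<bar>f x - g x\<bar> powr p + \<bar>g x - h x\<bar> powr p)"
      using assms(1) by (intro powr_add_le) auto
    finally show ?thesis .
  qed
  have "(\<integral>x. \<bar>f x - h x\<bar> powr p \<partial>M)
      \<le> (\<integral>x. 2 powr p * (\<bar>f x - g x\<bar> powr p + \<bar>g x - h x\<bar> powr p) \<partial>M)"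
    using bound_int pointwise order_trans[OF powr_ge_zero pointwise] by (intro integral_mono') auto
  also have "\<dots> = 2 powr p * ((\<integral>x. \<bar>f x - g x\<bar> powr p \<partial>M) + (\<integral>x. \<bar>g x - h x\<bar> powr p \<partial>M))"
    using assms(5,6) by simp
  finally show ?thesis .
qed

lemma Lp_norm_less:
  assumes "p > 0" "(\<integral>x. \<bar>f x\<bar> powr p \<partial>P) < \<epsilon> powr p" "\<epsilon> > 0"
  shows "Lp_norm P p f < \<epsilon>"
proof -
  have "Lp_norm P p f < (\<epsilon> powr p) powr (1 / p)"
    unfolding Lp_norm_def using assms by (intro powr_less_mono2) auto
  also have "\<dots> = \<epsilon>" using assms by (simp add: powr_powr)
  finally show ?thesis .
qed

lemma bounded_borel_sawtooth_Lp_approx: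
  assumes "prob_space P" "sets P = sets borel" "p > 0"
    and "T \<in> borel_measurable borel" "\<And>x. \<bar>T x\<bar> \<le> B" "t > 0"
  shows "\<exists>\<phi> d. d > 0 \<and> bounded (range \<phi>) \<and> integrable P (\<lambda>x. \<bar>sawtooth \<phi> d K x - T x\<bar> powr p) \<and>
           (\<integral>x. \<bar>sawtooth \<phi> d K x - T x\<bar> powr p \<partial>P) < t"
proof -
  interpret prob_space P by fact
  define \<eta> where "\<eta> = (t / 2) powr (1 / p)"
  define c where "c = 2 * (B + \<eta>)"
  have "\<eta> > 0" "\<eta> powr p = t / 2" using assms(3,6) by (simp_all add: \<eta>_def powr_powr)
  moreover have "B \<ge> 0" using assms(5)[of 0] by linarith
  ultimately have "c > 0" by (simp add: c_def)
  then have "t / (2 * c powr p) > 0" using assms(6) by simp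
  from bounded_borel_sawtooth_approx[OF finite_measure_axioms assms(2,4,5) \<open>\<eta> > 0\<close> this, of K, folded c_def]
  obtain \<phi> d C where "d > 0" "\<And>k. \<bar>\<phi> k\<bar> \<le> B + \<eta>" "C \<in> sets borel"
      "measure P (- C) < t / (2 * c powr p)"
    and err: "\<And>x. \<bar>sawtooth \<phi> d K x - T x\<bar> \<le> c"
      "\<And>x. x \<in> C \<Longrightarrow> \<bar>sawtooth \<phi> d K x - T x\<bar> \<le> \<eta>"
    by blast
  define g where "g = (\<lambda>x. \<eta> powr p + c powr p * indicator (- C) x)"
  have "- C \<in> sets P" using \<open>C \<in> sets borel\<close> assms(2) by auto
  then have ind_int: "integrable P (indicator (- C) :: real \<Rightarrow> real)"
    by (intro integrable_real_indicator) (simp_all add: less_top[symmetric])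
  then have g_int: "integrable P g" unfolding g_def by simp
  have pointwise: "\<bar>sawtooth \<phi> d K x - T x\<bar> powr p \<le> g x" for x
  proof (cases "x \<in> C")
    case True
    then show ?thesis using err(2)[of x] assms(3) by (simp add: g_def powr_mono2)
  next
    case False
    have "\<bar>sawtooth \<phi> d K x - T x\<bar> powr p \<le> c powr p" using err(1)[of x] assms(3) by (simp add: powr_mono2)
    with False show ?thesis by (simp add: g_def add_increasing)
  qed
  have "(\<lambda>x. \<bar>sawtooth \<phi> d K x - T x\<bar> powr p) \<in> borel_measurable P"
    unfolding measurable_cong_sets[OF assms(2) refl] using assms(4) by measurable
  then have int: "integrable P (\<lambda>x. \<bar>sawtooth \<phi> d K x - T x\<bar> powr p)"
    by (rule Bochner_Integration.integrable_bound[OF g_int])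
      (intro AE_I2, simp, rule order_trans[OF pointwise abs_ge_self])
  have "(\<integral>x. \<bar>sawtooth \<phi> d K x - T x\<bar> powr p \<partial>P) \<le> integral\<^sup>L P g"
    using int g_int pointwise by (rule integral_mono)
  also have "\<dots> = t / 2 + c powr p * measure P (- C)"
    unfolding g_def using \<open>- C \<in> sets P\<close> \<open>\<eta> powr p = t / 2\<close> ind_int
    by (subst Bochner_Integration.integral_add) (auto simp: prob_space)
  also have "\<dots> < t"
    using \<open>measure P (- C) < t / (2 * c powr p)\<close> \<open>c > 0\<close> by (simp add: less_divide_eq field_simps)
  finally have "(\<integral>x. \<bar>sawtooth \<phi> d K x - T x\<bar> powr p \<partial>P) < t" .
  moreover have "bounded (range \<phi>)"
    unfolding bounded_iff using \<open>\<And>k. \<bar>\<phi> k\<bar> \<le> B + \<eta>\<close> by auto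
  ultimately show ?thesis using \<open>d > 0\<close> int by blast
qed

lemma Lp_sawtooth_approx:
  assumes "prob_space P" "sets P = sets borel" "p > 0" "Lp_mem P p X" "t > 0"
  shows "\<exists>\<phi> d. d > 0 \<and> bounded (range \<phi>) \<and> (\<integral>x. \<bar>sawtooth \<phi> d K x - X x\<bar> powr p \<partial>P) < t"
proof -
  have meas_P: "borel_measurable P = borel_measurable borel"
    by (rule measurable_cong_sets) (simp_all add: assms(2))
  define s where "s = t / 2 powr (p + 1)"
  have "s > 0" using assms(5) by (simp add: s_def)
  obtain T B where T: "T \<in> borel_measurable borel" "\<And>x. \<bar>T x\<bar> \<le> B"
      "integrable P (\<lambda>x. \<bar>T x - X x\<bar> powr p)" "(\<integral>x. \<bar>T x - X x\<bar> powr p \<partial>P) < s"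
    using Lp_approx_by_bounded[OF assms(3) _ _ \<open>s > 0\<close>, of X P] assms(4) meas_P
    unfolding Lp_mem_def by auto
  obtain \<phi> d where Y: "d > 0" "bounded (range \<phi>)"
      "integrable P (\<lambda>x. \<bar>sawtooth \<phi> d K x - T x\<bar> powr p)"
      "(\<integral>x. \<bar>sawtooth \<phi> d K x - T x\<bar> powr p \<partial>P) < s"
    using bounded_borel_sawtooth_Lp_approx[OF assms(1-3) T(1,2) \<open>s > 0\<close>] by blast
  have "(\<integral>x. \<bar>sawtooth \<phi> d K x - X x\<bar> powr p \<partial>P)
      \<le> 2 powr p * ((\<integral>x. \<bar>sawtooth \<phi> d K x - T x\<bar> powr p \<partial>P) + (\<integral>x. \<bar>T x - X x\<bar> powr p \<partial>P))"
    using T(1,3) Y(3) assms(4)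
    by (intro integral_powr_abs_diff_triangle[OF assms(3)]) (simp_all add: Lp_mem_def meas_P)
  also have "\<dots> < 2 powr p * (s + s)"
    using T(4) Y(4) by (intro mult_strict_left_mono) auto
  also have "\<dots> = t" by (simp add: s_def powr_add)
  finally show ?thesis using Y(1,2) by blast
qed

theorem theorem1:
  fixes p :: real and P :: "real measure" and M :: real
  assumes "1 \<le> p"
    and "prob_space P" and "sets P = sets borel"
    and "M \<ge> 0"
  shows "\<forall>X. Lp_mem P p X \<longrightarrow> (\<forall>\<epsilon>>0. \<exists>Y. M_sensitive P M Y \<and> Lp_norm P p (\<lambda>x. Y x - X x) < \<epsilon>)"
proof (intro allI impI)
  fix X :: "real \<Rightarrow> real" and \<epsilon> :: real
  assume X: "Lp_mem P p X" and "\<epsilon> > 0"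
  have "p > 0" using assms(1) by simp
  obtain \<phi> d where "d > 0" "bounded (range \<phi>)"
    and "(\<integral>x. \<bar>sawtooth \<phi> d (M + 1) x - X x\<bar> powr p \<partial>P) < \<epsilon> powr p"
    using Lp_sawtooth_approx[OF assms(2,3) \<open>p > 0\<close> X, where t = "\<epsilon> powr p" and K = "M + 1"]
      \<open>\<epsilon> > 0\<close> by auto
  then have "Lp_norm P p (\<lambda>x. sawtooth \<phi> d (M + 1) x - X x) < \<epsilon>"
    by (intro Lp_norm_less[OF \<open>p > 0\<close> _ \<open>\<epsilon> > 0\<close>])
  moreover have "M_sensitive P M (sawtooth \<phi> d (M + 1))"
    using assms(3,4) \<open>d > 0\<close> \<open>bounded (range \<phi>)\<close> by (intro sawtooth_M_sensitive) auto
  ultimately show "\<exists>Y. M_sensitive P M Y \<and> Lp_norm P p (\<lambda>x. Y x - X x) < \<epsilon>"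
    by blast
qed

end
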